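(* Let $Q$ be a finite quiver with arrow set $Q_1$ which is connected, has no loops or $2$-cycles, in which every vertex is the source of exactly two arrows and the target of exactly two arrows, and which is equipped with bijections $f,g:Q_1\to Q_1$ such that for every $\alpha\in Q_1$, $\{f(\alpha),g(\alpha)\}$ is the set of the two arrows starting at the target of $\alpha$, and $f^3=\mathrm{id}$. For $\alpha\in Q_1$ let $\bar\alpha$ be the other arrow with the same source as $\alpha$. Write $\mathrm{PSL}_2(\mathbb{Z})=\langle x,y\mid x^2=(xy)^3=1\rangle$. Then setting $x(\alpha)=\bar\alpha$ and $y(\alpha)=g(\alpha)$ defines an action of $\mathrm{PSL}_2(\mathbb{Z})$ on $Q_1$ (in which $xy$ acts as $f$); this action is transitive, and the subgroup of elements acting trivially is normal of finite index. *)

theory Defs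
  imports "HOL-Algebra.Coset" "HOL-Algebra.Bij"
begin

definition quiver_connected :: "'v set \<Rightarrow> 'a set \<Rightarrow> ('a \<Rightarrow> 'v) \<Rightarrow> ('a \<Rightarrow> 'v) \<Rightarrow> bool" where
  "quiver_connected V A s t \<longleftrightarrow>
     (let E = (\<lambda>\<alpha>. (s \<alpha>, t \<alpha>)) ` A in \<forall>u\<in>V. \<forall>v\<in>V. (u, v) \<in> (E \<union> E\<inverse>)\<^sup>*)"

definition other_arrow :: "'a set \<Rightarrow> ('a \<Rightarrow> 'v) \<Rightarrow> 'a \<Rightarrow> 'a" where
  "other_arrow A s \<alpha> = (THE \<beta>. \<beta> \<in> A \<and> s \<beta> = s \<alpha> \<and> \<beta> \<noteq> \<alpha>)"

datatype gen = gx | gy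

text \<open>A letter is a generator together with a flag: True means the inverse of the generator.\<close>
type_synonym letter = "gen \<times> bool"

inductive psl_rel :: "letter list \<Rightarrow> letter list \<Rightarrow> bool" where
  refl: "psl_rel w w"
| sym: "psl_rel u v \<Longrightarrow> psl_rel v u"
| trans: "psl_rel u v \<Longrightarrow> psl_rel v w \<Longrightarrow> psl_rel u w"
| cong: "psl_rel u v \<Longrightarrow> psl_rel (a @ u @ b) (a @ v @ b)"
| cancel: "psl_rel [(c, e), (c, \<not> e)] []"
| rel_x: "psl_rel [(gx, False), (gx, False)] []"
| rel_xy: "psl_rel (concat (replicate 3 [(gx, False), (gy, False)])) []"

definition PSL2Z :: "letter list set monoid" where
  "PSL2Z = \<lparr> carrier = UNIV // {(u, v). psl_rel u v},
             mult = (\<lambda>P R. {w. \<exists>u\<in>P. \<exists>v\<in>R. psl_rel (u @ v) w}),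
             one = {w. psl_rel [] w} \<rparr>"

definition psl_x :: "letter list set" where
  "psl_x = {w. psl_rel [(gx, False)] w}"

definition psl_y :: "letter list set" where
  "psl_y = {w. psl_rel [(gy, False)] w}"

end

theory Submission
  imports Defs
begin

text \<open>
  Out-degree two makes x the involution swapping the two arrows leaving a vertex, and since
  f \<alpha> and g \<alpha> are the two arrows leaving the target of \<alpha>, x (g \<alpha>) = f \<alpha>; thus
  (xy)^3 = f^3 = 1 and the two permutations define an action of PSL2(Z). An orbit is closed
  under x, y and xy = f. So if it contains an arrow \<gamma>, it contains both arrows leaving the source
  and the target of \<gamma>; and if it contains f \<gamma>, it contains \<gamma> = f^2 (f \<gamma>). Hence the vertices
  whose outgoing arrows lie in the orbit are closed under both directions of every arrow, and by
  connectedness they are all vertices.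
  The kernel has finite index because the quotient embeds into the finite symmetric group.
\<close>

definition psl_class :: "letter list \<Rightarrow> letter list set" where
  "psl_class u = {w. psl_rel u w}"

lemma carrier_PSL2Z: "carrier PSL2Z = range psl_class"
  unfolding PSL2Z_def psl_class_def quotient_def by auto

lemma psl_class_eq_iff: "psl_class u = psl_class v \<longleftrightarrow> psl_rel u v"
proof
  assume "psl_class u = psl_class v"
  then show "psl_rel u v" by (auto simp: psl_class_def psl_rel.refl)
next
  assume "psl_rel u v"
  then show "psl_class u = psl_class v"
    unfolding psl_class_def by (auto intro: psl_rel.trans psl_rel.sym)
qed

lemma psl_rel_append: "psl_rel u u' \<Longrightarrow> psl_rel v v' \<Longrightarrow> psl_rel (u @ v) (u' @ v')"
  using psl_rel.cong[of u u' "[]" v] psl_rel.cong[of v v' u' "[]"]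
  by (auto intro: psl_rel.trans)

lemma PSL2Z_mult_psl_class: "psl_class u \<otimes>\<^bsub>PSL2Z\<^esub> psl_class v = psl_class (u @ v)"
  unfolding PSL2Z_def psl_class_def
  by (auto intro: psl_rel.trans psl_rel_append psl_rel.refl psl_rel.sym)

lemma PSL2Z_one: "\<one>\<^bsub>PSL2Z\<^esub> = psl_class []"
  by (simp add: PSL2Z_def psl_class_def)

definition inverse_word :: "letter list \<Rightarrow> letter list" where
  "inverse_word u = rev (map (\<lambda>(c, e). (c, \<not> e)) u)"

lemma psl_rel_inverse_word: "psl_rel (inverse_word u @ u) []"
proof (induction u)
  case Nil
  then show ?case by (simp add: inverse_word_def psl_rel.refl)
next
  case (Cons l u)
  obtain c e where l: "l = (c, e)" by (cases l)
  have "psl_rel (inverse_word u @ [(c, \<not> e), (c, \<not> \<not> e)] @ u) (inverse_word u @ [] @ u)"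
    by (rule psl_rel.cong[OF psl_rel.cancel])
  then show ?case
    using Cons by (auto simp: inverse_word_def l intro: psl_rel.trans)
qed

lemma group_PSL2Z: "group PSL2Z"
proof (rule groupI)
  fix x
  assume "x \<in> carrier PSL2Z"
  then obtain u where x: "x = psl_class u" by (auto simp: carrier_PSL2Z)
  have "psl_class (inverse_word u) \<otimes>\<^bsub>PSL2Z\<^esub> x = \<one>\<^bsub>PSL2Z\<^esub>"
    using psl_rel_inverse_word
    by (simp add: x PSL2Z_mult_psl_class PSL2Z_one psl_class_eq_iff)
  then show "\<exists>y\<in>carrier PSL2Z. y \<otimes>\<^bsub>PSL2Z\<^esub> x = \<one>\<^bsub>PSL2Z\<^esub>"
    by (auto simp: carrier_PSL2Z)
qed (auto simp: carrier_PSL2Z PSL2Z_mult_psl_class PSL2Z_one)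

fun letter_perm :: "'a set \<Rightarrow> ('a \<Rightarrow> 'a) \<Rightarrow> ('a \<Rightarrow> 'a) \<Rightarrow> letter \<Rightarrow> 'a \<Rightarrow> 'a" where
  "letter_perm A a b (gx, _) = a"
| "letter_perm A a b (gy, False) = b"
| "letter_perm A a b (gy, True) = inv_into A b"

fun word_perm :: "'a set \<Rightarrow> ('a \<Rightarrow> 'a) \<Rightarrow> ('a \<Rightarrow> 'a) \<Rightarrow> letter list \<Rightarrow> 'a \<Rightarrow> 'a" where
  "word_perm A a b [] = id"
| "word_perm A a b (l # w) = letter_perm A a b l \<circ> word_perm A a b w"

lemma word_perm_append: "word_perm A a b (u @ v) = word_perm A a b u \<circ> word_perm A a b v"
  by (induction u) auto

definition psl_action :: "'a set \<Rightarrow> ('a \<Rightarrow> 'a) \<Rightarrow> ('a \<Rightarrow> 'a) \<Rightarrow> letter list set \<Rightarrow> 'a \<Rightarrow> 'a" where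
  "psl_action A a b P = restrict (word_perm A a b (SOME u. u \<in> P)) A"

locale psl2z_perm_pair =
  fixes A :: "'a set" and a b :: "'a \<Rightarrow> 'a"
  assumes a_bij: "bij_betw a A A" and b_bij: "bij_betw b A A"
    and a_involution: "\<And>\<alpha>. \<alpha> \<in> A \<Longrightarrow> a (a \<alpha>) = \<alpha>"
    and ab_order3: "\<And>\<alpha>. \<alpha> \<in> A \<Longrightarrow> a (b (a (b (a (b \<alpha>))))) = \<alpha>"
begin

lemma word_perm_bij: "bij_betw (word_perm A a b w) A A"
proof (induction w)
  case (Cons l w)
  obtain c e where "l = (c, e)" by (cases l)
  then have "bij_betw (letter_perm A a b l) A A"
    using a_bij b_bij bij_betw_inv_into[OF b_bij] by (cases c; cases e) auto
  then show ?case using bij_betw_trans[OF Cons] by (simp only: word_perm.simps)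
qed (simp add: bij_betw_id[unfolded id_def])

lemma word_perm_in: "\<alpha> \<in> A \<Longrightarrow> word_perm A a b w \<alpha> \<in> A"
  using word_perm_bij bij_betwE by blast

lemma word_perm_psl_rel: "psl_rel u v \<Longrightarrow> \<forall>\<alpha>\<in>A. word_perm A a b u \<alpha> = word_perm A a b v \<alpha>"
proof (induction rule: psl_rel.induct)
  case (cong u v l r)
  then show ?case by (simp add: word_perm_append word_perm_in)
next
  case (cancel c e)
  have "\<alpha> \<in> A \<Longrightarrow> b (inv_into A b \<alpha>) = \<alpha> \<and> inv_into A b (b \<alpha>) = \<alpha>" for \<alpha>
    using b_bij by (simp add: bij_betw_def f_inv_into_f inv_into_f_f)
  then show ?case by (cases c; cases e) (auto simp: a_involution)
qed (auto simp: a_involution ab_order3 eval_nat_numeral)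

lemma psl_action_psl_class: "psl_action A a b (psl_class u) = restrict (word_perm A a b u) A"
proof -
  have "psl_rel u (SOME w. w \<in> psl_class u)"
    using someI[of "\<lambda>w. w \<in> psl_class u" u] by (simp add: psl_class_def psl_rel.refl)
  then show ?thesis
    unfolding psl_action_def using word_perm_psl_rel by (auto intro!: restrict_ext)
qed

lemma psl_action_in_Bij: "psl_action A a b (psl_class u) \<in> Bij A"
  using word_perm_bij[of u]
  by (simp add: psl_action_psl_class Bij_def bij_betw_def inj_on_def image_def)

lemma psl_action_hom: "psl_action A a b \<in> hom PSL2Z (BijGroup A)"
proof -
  have "psl_action A a b (psl_class u \<otimes>\<^bsub>PSL2Z\<^esub> psl_class v)
          = psl_action A a b (psl_class u) \<otimes>\<^bsub>BijGroup A\<^esub> psl_action A a b (psl_class v)" for u v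
    using psl_action_in_Bij
    by (auto simp: BijGroup_def compose_def PSL2Z_mult_psl_class psl_action_psl_class
        word_perm_append word_perm_in)
  then show ?thesis
    by (auto simp: hom_def carrier_PSL2Z psl_action_in_Bij BijGroup_def)
qed

lemma group_hom_psl_action: "group_hom PSL2Z (BijGroup A) (psl_action A a b)"
  by (simp add: group_hom_def group_hom_axioms_def group_PSL2Z group_BijGroup psl_action_hom)

lemma psl_action_x: "psl_action A a b psl_x = restrict a A"
  using psl_action_psl_class[of "[(gx, False)]"] by (simp add: psl_x_def psl_class_def)

lemma psl_action_y: "psl_action A a b psl_y = restrict b A"
  using psl_action_psl_class[of "[(gy, False)]"] by (simp add: psl_y_def psl_class_def)

lemma psl_action_xy: "psl_action A a b (psl_x \<otimes>\<^bsub>PSL2Z\<^esub> psl_y) = restrict (a \<circ> b) A"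
  using psl_action_psl_class[of "[(gx, False), (gy, False)]"]
    PSL2Z_mult_psl_class[of "[(gx, False)]" "[(gy, False)]"]
  by (simp add: psl_x_def psl_y_def flip: psl_class_def)

definition word_orbit :: "'a \<Rightarrow> 'a set" where
  "word_orbit \<alpha> = {word_perm A a b w \<alpha> | w. True}"

lemma word_orbit_self: "\<alpha> \<in> word_orbit \<alpha>"
  unfolding word_orbit_def by (metis (mono_tags) CollectI id_apply word_perm.simps(1))

lemma word_orbit_subset: "\<alpha> \<in> A \<Longrightarrow> word_orbit \<alpha> \<subseteq> A"
  unfolding word_orbit_def using word_perm_in by auto

lemma word_orbit_closed:
  assumes "\<beta> \<in> word_orbit \<alpha>"
  shows "a \<beta> \<in> word_orbit \<alpha>" and "b \<beta> \<in> word_orbit \<alpha>"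
proof -
  obtain w where w: "\<beta> = word_perm A a b w \<alpha>" using assms by (auto simp: word_orbit_def)
  have "a \<beta> = word_perm A a b ((gx, False) # w) \<alpha>" "b \<beta> = word_perm A a b ((gy, False) # w) \<alpha>"
    by (simp_all add: w)
  then show "a \<beta> \<in> word_orbit \<alpha>" "b \<beta> \<in> word_orbit \<alpha>"
    unfolding word_orbit_def by blast+
qed

lemma psl_action_orbit:
  assumes "\<alpha> \<in> A" "\<beta> \<in> word_orbit \<alpha>"
  shows "\<exists>h\<in>carrier PSL2Z. psl_action A a b h \<alpha> = \<beta>"
proof -
  obtain w where "\<beta> = word_perm A a b w \<alpha>" using assms(2) by (auto simp: word_orbit_def)
  then show ?thesis
    using assms(1) by (intro bexI[of _ "psl_class w"]) (auto simp: psl_action_psl_class carrier_PSL2Z)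
qed

end

lemma finite_carrier_BijGroup:
  assumes "finite A"
  shows "finite (carrier (BijGroup A))"
proof (rule finite_subset)
  show "carrier (BijGroup A) \<subseteq> PiE A (\<lambda>_. A)"
    by (auto simp: BijGroup_def Bij_def PiE_def bij_betw_def)
qed (use assms in \<open>auto intro: finite_PiE\<close>)

lemma (in group_hom) finite_rcosets_kernel:
  assumes "finite (carrier H)"
  shows "finite (rcosets\<^bsub>G\<^esub> (kernel G H h))"
proof -
  have "(\<lambda>X. the_elem (h ` X)) ` carrier (G Mod kernel G H h) \<subseteq> carrier H"
    using FactGroup_hom by (auto simp: hom_def)
  then have "finite (carrier (G Mod kernel G H h))"
    using assms FactGroup_inj_on finite_imageD finite_subset by blast
  then show ?thesis by (simp add: FactGroup_def)
qed

locale fg_quiver =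
  fixes V :: "'v set" and A :: "'a set" and s t :: "'a \<Rightarrow> 'v" and f g :: "'a \<Rightarrow> 'a"
  assumes src: "s ` A \<subseteq> V" and tgt: "t ` A \<subseteq> V"
    and out2: "\<forall>v\<in>V. card {\<alpha>\<in>A. s \<alpha> = v} = 2"
    and fg: "\<forall>\<alpha>\<in>A. {f \<alpha>, g \<alpha>} = {\<beta>\<in>A. s \<beta> = t \<alpha>}"
begin

abbreviation other :: "'a \<Rightarrow> 'a" where
  "other \<equiv> other_arrow A s"

lemma other_arrow_unique:
  assumes "\<alpha> \<in> A"
  shows "\<exists>!\<beta>. \<beta> \<in> A \<and> s \<beta> = s \<alpha> \<and> \<beta> \<noteq> \<alpha>"
proof -
  have "card {\<beta>\<in>A. s \<beta> = s \<alpha>} = 2" using out2 src assms by auto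
  then obtain x y where xy: "{\<beta>\<in>A. s \<beta> = s \<alpha>} = {x, y}" "x \<noteq> y"
    by (auto simp: card_2_iff)
  have "\<alpha> \<in> {x, y}" using assms xy(1) by blast
  then have "\<exists>!\<beta>. \<beta> \<in> {x, y} \<and> \<beta> \<noteq> \<alpha>" using xy(2) by auto
  moreover have "\<And>\<beta>. \<beta> \<in> {x, y} \<longleftrightarrow> \<beta> \<in> A \<and> s \<beta> = s \<alpha>" using xy(1) by blast
  ultimately show ?thesis by simp
qed

lemma other_arrow:
  assumes "\<alpha> \<in> A"
  shows "other \<alpha> \<in> A" "s (other \<alpha>) = s \<alpha>" "other \<alpha> \<noteq> \<alpha>"
  using theI'[OF other_arrow_unique[OF assms]] unfolding other_arrow_def by blast+

lemma other_arrow_eqI: "\<alpha> \<in> A \<Longrightarrow> \<beta> \<in> A \<Longrightarrow> s \<beta> = s \<alpha> \<Longrightarrow> \<beta> \<noteq> \<alpha> \<Longrightarrow> other \<alpha> = \<beta>"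
  using other_arrow_unique[of \<alpha>] other_arrow[of \<alpha>] by auto

lemma other_other: "\<alpha> \<in> A \<Longrightarrow> other (other \<alpha>) = \<alpha>"
  using other_arrow other_arrow_eqI[of "other \<alpha>" \<alpha>] by fastforce

lemma bij_other: "bij_betw other A A"
  by (rule bij_betw_byWitness[where f' = other]) (auto simp: other_other other_arrow)

lemma fg_arrows:
  assumes "\<alpha> \<in> A"
  shows "f \<alpha> \<in> A" "g \<alpha> \<in> A" "s (f \<alpha>) = t \<alpha>" "s (g \<alpha>) = t \<alpha>" "f \<alpha> \<noteq> g \<alpha>"
proof -
  have fg\<alpha>: "{f \<alpha>, g \<alpha>} = {\<beta>\<in>A. s \<beta> = t \<alpha>}" using fg assms by auto
  then show "f \<alpha> \<in> A" "g \<alpha> \<in> A" "s (f \<alpha>) = t \<alpha>" "s (g \<alpha>) = t \<alpha>" by blast+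
  have "card {f \<alpha>, g \<alpha>} = 2" using fg\<alpha> out2 tgt assms by auto
  then show "f \<alpha> \<noteq> g \<alpha>" by auto
qed

lemma other_g: "\<alpha> \<in> A \<Longrightarrow> other (g \<alpha>) = f \<alpha>"
  using fg_arrows by (intro other_arrow_eqI) auto

lemma closed_arrow_set_eq:
  assumes conn: "quiver_connected V A s t" and f3: "\<forall>\<alpha>\<in>A. f (f (f \<alpha>)) = \<alpha>"
    and T: "T \<subseteq> A" "\<alpha>\<^sub>0 \<in> T" "\<And>\<beta>. \<beta> \<in> T \<Longrightarrow> other \<beta> \<in> T" "\<And>\<beta>. \<beta> \<in> T \<Longrightarrow> g \<beta> \<in> T"
  shows "T = A"
proof -
  have T_f: "f \<beta> \<in> T" if "\<beta> \<in> T" for \<beta>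
    using other_g[of \<beta>] T(3)[OF T(4)[OF that]] T(1) that by auto
  define S where "S = {v. \<forall>\<beta>\<in>A. s \<beta> = v \<longrightarrow> \<beta> \<in> T}"
  have S_src: "s \<gamma> \<in> S" if "\<gamma> \<in> T" for \<gamma>
  proof -
    have "\<beta> \<in> T" if "\<beta> \<in> A" "s \<beta> = s \<gamma>" for \<beta>
      using \<open>\<gamma> \<in> T\<close> T(1,3) other_arrow_eqI[of \<gamma> \<beta>] that by (cases "\<beta> = \<gamma>") auto
    then show ?thesis by (simp add: S_def)
  qed
  have S_fwd: "t \<gamma> \<in> S" if "\<gamma> \<in> A" "s \<gamma> \<in> S" for \<gamma>
  proof -
    have "\<gamma> \<in> T" using that by (simp add: S_def)
    have "\<beta> \<in> T" if "\<beta> \<in> A" "s \<beta> = t \<gamma>" for \<beta>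
    proof -
      have "\<beta> \<in> {f \<gamma>, g \<gamma>}" using fg \<open>\<gamma> \<in> A\<close> that by auto
      then show ?thesis using T_f T(4) \<open>\<gamma> \<in> T\<close> by auto
    qed
    then show ?thesis by (simp add: S_def)
  qed
  have S_bwd: "s \<gamma> \<in> S" if "\<gamma> \<in> A" "t \<gamma> \<in> S" for \<gamma>
  proof -
    have "f \<gamma> \<in> T" using that fg_arrows(1,3)[OF that(1)] by (simp add: S_def)
    then have "f (f (f \<gamma>)) \<in> T" using T_f by blast
    then show ?thesis using f3 that(1) S_src by auto
  qed
  show ?thesis
  proof
    show "A \<subseteq> T"
    proof
      fix \<beta> assume \<beta>: "\<beta> \<in> A"
      define E where "E = (\<lambda>\<alpha>. (s \<alpha>, t \<alpha>)) ` A"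
      have "\<alpha>\<^sub>0 \<in> A" using T(1,2) by blast
      then have "(s \<alpha>\<^sub>0, s \<beta>) \<in> (E \<union> E\<inverse>)\<^sup>*"
        using conn src \<beta> unfolding quiver_connected_def E_def Let_def by blast
      then have "s \<beta> \<in> S"
      proof (induction rule: rtrancl_induct)
        case base
        show ?case using S_src[OF T(2)] .
      next
        case step
        then show ?case using S_fwd S_bwd unfolding E_def by auto
      qed
      then show "\<beta> \<in> T" using \<beta> by (simp add: S_def)
    qed
  qed (rule T(1))
qed

end

theorem proposition3p3:
  fixes V :: "'v set" and A :: "'a set" and s t :: "'a \<Rightarrow> 'v" and f g :: "'a \<Rightarrow> 'a"
  assumes finV: "finite V" and finA: "finite A"
    and src: "s ` A \<subseteq> V" and tgt: "t ` A \<subseteq> V"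
    and conn: "quiver_connected V A s t"
    and no_loops: "\<forall>\<alpha>\<in>A. s \<alpha> \<noteq> t \<alpha>"
    and no_2cycles: "\<not> (\<exists>\<alpha>\<in>A. \<exists>\<beta>\<in>A. s \<alpha> = t \<beta> \<and> t \<alpha> = s \<beta>)"
    and out2: "\<forall>v\<in>V. card {\<alpha>\<in>A. s \<alpha> = v} = 2"
    and in2: "\<forall>v\<in>V. card {\<alpha>\<in>A. t \<alpha> = v} = 2"
    and f_bij: "bij_betw f A A" and g_bij: "bij_betw g A A"
    and fg: "\<forall>\<alpha>\<in>A. {f \<alpha>, g \<alpha>} = {\<beta>\<in>A. s \<beta> = t \<alpha>}"
    and f3: "\<forall>\<alpha>\<in>A. f (f (f \<alpha>)) = \<alpha>"
  shows "\<exists>\<phi>. \<phi> \<in> hom PSL2Z (BijGroup A)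
           \<and> \<phi> psl_x = restrict (other_arrow A s) A
           \<and> \<phi> psl_y = restrict g A
           \<and> \<phi> (psl_x \<otimes>\<^bsub>PSL2Z\<^esub> psl_y) = restrict f A
           \<and> (\<forall>\<alpha>\<in>A. \<forall>\<beta>\<in>A. \<exists>h\<in>carrier PSL2Z. \<phi> h \<alpha> = \<beta>)
           \<and> kernel PSL2Z (BijGroup A) \<phi> \<lhd> PSL2Z
           \<and> finite (rcosets\<^bsub>PSL2Z\<^esub> (kernel PSL2Z (BijGroup A) \<phi>))"
proof -
  interpret fg_quiver V A s t f g
    using src tgt out2 fg by unfold_locales
  interpret psl2z_perm_pair A other g
    using bij_other g_bij other_other f3 by unfold_locales (auto simp: other_g fg_arrows)
  interpret group_hom PSL2Z "BijGroup A" "psl_action A other g"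
    by (rule group_hom_psl_action)
  have action_xy: "psl_action A other g (psl_x \<otimes>\<^bsub>PSL2Z\<^esub> psl_y) = restrict f A"
    by (auto simp: psl_action_xy other_g)
  have transitive: "\<forall>\<alpha>\<in>A. \<forall>\<beta>\<in>A. \<exists>h\<in>carrier PSL2Z. psl_action A other g h \<alpha> = \<beta>"
  proof (intro ballI)
    fix \<alpha> \<beta> assume "\<alpha> \<in> A" "\<beta> \<in> A"
    moreover have "word_orbit \<alpha> = A"
      by (rule closed_arrow_set_eq[OF conn f3 word_orbit_subset[OF \<open>\<alpha> \<in> A\<close>] word_orbit_self
            word_orbit_closed])
    ultimately show "\<exists>h\<in>carrier PSL2Z. psl_action A other g h \<alpha> = \<beta>"
      by (simp add: psl_action_orbit)
  qed
  show ?thesis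
    by (intro exI[of _ "psl_action A other g"] conjI psl_action_hom psl_action_x psl_action_y
        action_xy transitive normal_kernel finite_rcosets_kernel finite_carrier_BijGroup finA)
qed

end
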